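(* Let $a,b$ be integers with $0<a<b$ and let $\gamma_1<\gamma_2<\cdots$ be the greedy dissociated sequence starting from $a,b$. For $n\ge1$ let $\mathscr S_n := \sum_{i=1}^n\gamma_i$, $\mathscr T_n := \mathscr S_n+1$, and $D_n := \left\{\sum_{i=1}^n\varepsilon_i\gamma_i:\ \varepsilon_i\in\{-1,0,1\}\right\}$. Then for every $n\ge 1$, $\mathscr T_n\notin D_n$. Consequently, $\gamma_{n+1}\le\mathscr T_n$ for all $n\ge 2$.
   Context: A set $\mathcal S\subseteq\mathbb N$ is dissociated if all of its finite subsets have different sums. The greedy dissociated sequence starting from $a,b$ is defined by $\gamma_1=a$, $\gamma_2=b$, and for $r\ge 3$, $\gamma_r$ is the smallest integer greater than $\gamma_{r-1}$ such that $\{\gamma_1,\dots,\gamma_r\}$ is dissociated. *)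

theory Defs
  imports Main
begin

definition dissociated :: "nat set \<Rightarrow> bool" where
  "dissociated S \<longleftrightarrow>
     (\<forall>A B. A \<subseteq> S \<longrightarrow> B \<subseteq> S \<longrightarrow> finite A \<longrightarrow> finite B \<longrightarrow> \<Sum>A = \<Sum>B \<longrightarrow> A = B)"

primrec glist :: "nat \<Rightarrow> nat \<Rightarrow> nat \<Rightarrow> nat list" where
  "glist a b 0 = [a, b]"
| "glist a b (Suc n) =
     (let xs = glist a b n
      in xs @ [LEAST x. x > last xs \<and> dissociated (insert x (set xs))])"

text \<open>The greedy dissociated sequence, 1-indexed: gamma a b r = gamma_r for r \<ge> 1.\<close>
definition gamma :: "nat \<Rightarrow> nat \<Rightarrow> nat \<Rightarrow> nat" where
  "gamma a b r = glist a b r ! (r - 1)"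

definition Dset :: "nat \<Rightarrow> nat \<Rightarrow> nat \<Rightarrow> int set" where
  "Dset a b n = {(\<Sum>i=1..n. \<epsilon> i * int (gamma a b i)) | \<epsilon>. \<forall>i. \<epsilon> i \<in> {-1, 0, 1}}"

end

theory Submission
  imports Defs
begin

text \<open>
  A signed combination of \<open>\<gamma>\<^sub>1, \<dots>, \<gamma>\<^sub>n\<close> with coefficients in \<open>{-1, 0, 1}\<close> is at most
  \<open>\<S>\<^sub>n\<close>, so it never reaches \<open>\<S>\<^sub>n + 1\<close>. Conversely, a natural number exceeding the sum of
  a dissociated set can be added to it without destroying dissociativity: a subset containing
  the new element has a larger sum than any subset avoiding it. Hence \<open>\<S>\<^sub>n + 1\<close> is always an
  admissible candidate for \<open>\<gamma>\<^sub>n\<^sub>+\<^sub>1\<close>, and the greedy choice can only be smaller.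
\<close>

lemma dissociated_empty: "dissociated {}"
  by (simp add: dissociated_def)

lemma dissociated_insert_gt_Sum:
  assumes diss: "dissociated X" and fin: "finite X" and gt: "\<Sum>X < y"
  shows "dissociated (insert y X)"
  unfolding dissociated_def
proof (intro allI impI)
  fix A B assume A: "A \<subseteq> insert y X" and B: "B \<subseteq> insert y X"
    and finA: "finite A" and finB: "finite B" and eq: "\<Sum>A = \<Sum>B"
  have lt_if_mem: "\<Sum>C < \<Sum>D"
    if "C \<subseteq> insert y X" "y \<notin> C" "y \<in> D" "finite D" for C D
  proof -
    have "\<Sum>C \<le> \<Sum>X" using that(1,2) fin by (intro sum_mono2) auto
    also have "\<dots> < y" by (fact gt)
    also have "y \<le> \<Sum>D" using that(3,4) by (simp add: sum.remove)
    finally show ?thesis .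
  qed
  have y_iff: "y \<in> A \<longleftrightarrow> y \<in> B"
    using lt_if_mem[OF A _ _ finB] lt_if_mem[OF B _ _ finA] eq by auto
  have "\<Sum>(A - {y}) = \<Sum>(B - {y})"
    using eq y_iff finA finB by (cases "y \<in> A") (simp_all add: sum_diff1_nat)
  moreover have "A - {y} \<subseteq> X" "B - {y} \<subseteq> X" using A B by auto
  ultimately have "A - {y} = B - {y}"
    using diss finA finB unfolding dissociated_def by blast
  then show "A = B" using y_iff by blast
qed

lemma dissociated_pair:
  assumes "0 < a" "a < b"
  shows "dissociated {a, b}"
proof -
  have "dissociated {a}"
    using dissociated_insert_gt_Sum[OF dissociated_empty] assms(1) by simp
  then show ?thesis
    using dissociated_insert_gt_Sum[of "{a}" b] assms(2) by (simp add: insert_commute)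
qed

lemma Sum_set_le_sum_list: "\<Sum>(set xs) \<le> sum_list (xs :: 'a :: canonically_ordered_monoid_add list)"
  by (induction xs) (auto simp: sum.insert_if add_increasing add_mono)

definition admissible_next :: "nat list \<Rightarrow> nat \<Rightarrow> bool" where
  "admissible_next xs x \<longleftrightarrow> last xs < x \<and> dissociated (insert x (set xs))"

definition greedy_next :: "nat list \<Rightarrow> nat" where
  "greedy_next xs = (LEAST x. admissible_next xs x)"

lemma admissible_next_sum_list_Suc:
  assumes "dissociated (set xs)" "xs \<noteq> []"
  shows "admissible_next xs (sum_list xs + 1)"
  unfolding admissible_next_def
proof
  show "last xs < sum_list xs + 1"
    using assms(2) by (simp add: member_le_sum_list le_imp_less_Suc)
  show "dissociated (insert (sum_list xs + 1) (set xs))"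
    using assms(1) Sum_set_le_sum_list[of xs]
    by (intro dissociated_insert_gt_Sum) auto
qed

lemma dissociated_insert_greedy_next:
  assumes "dissociated (set xs)" "xs \<noteq> []"
  shows "dissociated (insert (greedy_next xs) (set xs))"
  using LeastI[of "admissible_next xs", OF admissible_next_sum_list_Suc[OF assms]]
  unfolding greedy_next_def admissible_next_def by blast

lemma greedy_next_le_sum_list:
  assumes "dissociated (set xs)" "xs \<noteq> []"
  shows "greedy_next xs \<le> sum_list xs + 1"
  unfolding greedy_next_def
  using Least_le[of "admissible_next xs", OF admissible_next_sum_list_Suc[OF assms]] .

lemma glist_Suc [simp]: "glist a b (Suc n) = glist a b n @ [greedy_next (glist a b n)]"
  by (simp add: greedy_next_def admissible_next_def Let_def)

declare glist.simps(2) [simp del]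

lemma length_glist: "length (glist a b n) = n + 2"
  by (induction n) simp_all

lemma glist_nonempty: "glist a b n \<noteq> []"
  using length_glist[of a b n] by auto

lemma nth_glist_mono:
  assumes "m \<le> k" "i < length (glist a b m)"
  shows "glist a b k ! i = glist a b m ! i"
  using assms(1)
proof (induction k rule: dec_induct)
  case (step k)
  have "i < length (glist a b k)" using assms(2) step(1) by (simp add: length_glist)
  then show ?case using step(3) by (simp add: nth_append)
qed simp

lemma gamma_eq_nth_glist:
  assumes "1 \<le> i" "i \<le> m + 2"
  shows "gamma a b i = glist a b m ! (i - 1)"
  using assms nth_glist_mono[of i m "i - 1" a b] nth_glist_mono[of m i "i - 1" a b]
  unfolding gamma_def by (cases "i \<le> m") (simp_all add: length_glist)

lemma gamma_greedy_next: "gamma a b (m + 3) = greedy_next (glist a b m)"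
  using gamma_eq_nth_glist[of "m + 3" "Suc m" a b]
  by (simp add: nth_append length_glist)

lemma sum_list_glist: "sum_list (glist a b m) = (\<Sum>i=1..m+2. gamma a b i)"
proof -
  have "sum_list (glist a b m) = (\<Sum>i<m+2. glist a b m ! i)"
    by (simp add: sum_list_sum_nth length_glist lessThan_atLeast0)
  also have "\<dots> = (\<Sum>i=1..m+2. glist a b m ! (i - 1))"
    by (rule sum.reindex_bij_witness[of _ "\<lambda>i. i - 1" Suc]) auto
  also have "\<dots> = (\<Sum>i=1..m+2. gamma a b i)"
    using gamma_eq_nth_glist[of _ m a b] by (intro sum.cong) auto
  finally show ?thesis .
qed

lemma dissociated_glist:
  assumes "0 < a" "a < b"
  shows "dissociated (set (glist a b n))"
proof (induction n)
  case 0
  show ?case using dissociated_pair[OF assms] by simp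
next
  case (Suc n)
  then show ?case
    using dissociated_insert_greedy_next[OF Suc glist_nonempty] by simp
qed

lemma signed_sum_le_sum:
  assumes "\<forall>i. \<epsilon> i \<in> {-1, 0, 1 :: int}"
  shows "(\<Sum>i\<in>I. \<epsilon> i * int (f i)) \<le> (\<Sum>i\<in>I. int (f i))"
proof (rule sum_mono)
  fix i
  have "\<epsilon> i \<le> 1" using assms[rule_format, of i] by auto
  then show "\<epsilon> i * int (f i) \<le> int (f i)"
    using mult_right_mono[of "\<epsilon> i" 1 "int (f i)"] by simp
qed

lemma Dset_le_sum:
  assumes "x \<in> Dset a b n"
  shows "x \<le> int (\<Sum>i=1..n. gamma a b i)"
proof -
  obtain \<epsilon> where "\<forall>i. \<epsilon> i \<in> {-1, 0, 1}" "x = (\<Sum>i=1..n. \<epsilon> i * int (gamma a b i))"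
    using assms unfolding Dset_def by blast
  then show ?thesis using signed_sum_le_sum by (simp add: of_nat_sum)
qed

theorem lemma2:
  fixes a b :: nat
  assumes "0 < a" and "a < b"
  shows "(\<forall>n\<ge>1. int (\<Sum>i=1..n. gamma a b i) + 1 \<notin> Dset a b n)
       \<and> (\<forall>n\<ge>2. gamma a b (n + 1) \<le> (\<Sum>i=1..n. gamma a b i) + 1)"
proof (intro conjI allI impI)
  fix n :: nat
  show "int (\<Sum>i=1..n. gamma a b i) + 1 \<notin> Dset a b n"
    using Dset_le_sum[of _ a b n] by force
next
  fix n :: nat assume "2 \<le> n"
  then obtain m where n: "n = m + 2" using le_Suc_ex by force
  have "gamma a b (n + 1) = greedy_next (glist a b m)"
    using gamma_greedy_next by (simp add: n numeral_3_eq_3)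
  also have "\<dots> \<le> sum_list (glist a b m) + 1"
    using greedy_next_le_sum_list[OF dissociated_glist[OF assms] glist_nonempty] .
  also have "\<dots> = (\<Sum>i=1..n. gamma a b i) + 1"
    by (simp add: n sum_list_glist)
  finally show "gamma a b (n + 1) \<le> (\<Sum>i=1..n. gamma a b i) + 1" .
qed

end
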